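(* Let $G$ be a finite abelian group and $T \subsetneq G$ a non-empty subset. Then there is a set $A \subset G$ with $T \subsetneq A$ having the following property: given any $d_0 \ge 1$, there exist some $d \ge d_0$ and a family $\mathcal{F}$ consisting of at least $d_0$ pairwise disjoint subsets of $A^d$ such that the set $G \times \left(A^d \setminus \bigcup_{S\in\mathcal{S}} S\right) \subset G^{d+1}$ is $T$-tilable whenever $\mathcal{S} \subset \mathcal{F}$ satisfies $|\mathcal{S}| \equiv 1 \pmod{|T|}$.
   Context: For an abelian group $G$, a non-empty subset $T\subset G$ and $e\ge1$, let $\mathsf{T}_j \subset G^e$ ($1\le j\le e$) be the set of points whose $j$-th coordinate lies in $T$ and whose other coordinates are $0$. A copy of $T$ in $G^e$ is any translate $\mathsf{T}_j + x$ with $x \in G^e$ and $1 \le j \le e$. A subset of $G^e$ is $T$-tilable if it is a disjoint union of copies of $T$. *)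

theory Defs
  imports Main
begin

text \<open>Points of \<open>G^e\<close> are lists of length \<open>e\<close>; coordinates are indexed \<open>0..<e\<close>.\<close>

definition power_set :: "'g set \<Rightarrow> nat \<Rightarrow> 'g list set" where
  "power_set A e = {xs. length xs = e \<and> set xs \<subseteq> A}"

definition copy_of :: "'g::ab_group_add set \<Rightarrow> nat \<Rightarrow> 'g list \<Rightarrow> 'g list set" where
  "copy_of T j x = {x[j := x ! j + t] | t. t \<in> T}"

definition copies :: "'g::ab_group_add set \<Rightarrow> nat \<Rightarrow> 'g list set set" where
  "copies T e = {copy_of T j x | j x. j < e \<and> length x = e}"

definition tilable :: "'g::ab_group_add set \<Rightarrow> nat \<Rightarrow> 'g list set \<Rightarrow> bool" where
  "tilable T e X \<longleftrightarrow> (\<exists>C. C \<subseteq> copies T e \<and> pairwise disjnt C \<and> \<Union>C = X)"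

end

theory Submission
  imports Defs
begin

text \<open>Choose \<open>s\<close> with \<open>s + T \<noteq> T\<close> and split \<open>T = Q \<union> M\<close>, \<open>s + T = M \<union> P\<close> with \<open>M = T \<inter> (s + T)\<close>;
  take \<open>A = Q \<union> M \<union> P\<close>. With \<open>d = N + d0\<close>, \<open>N = |G| d0\<close>, the family consists of the boxes
  \<open>Q^j \<times> P \<times> Q^(d - j - 1)\<close> for the last \<open>d0\<close> coordinates \<open>j\<close>. Let the chosen boxes be indexed by \<open>J\<close>,
  \<open>|J| = |T| q + 1\<close>. Inject \<open>G \<times> {..<q}\<close> into the first \<open>N\<close> coordinates; over \<open>x \<in> G\<close> the \<open>|T| q\<close>
  coordinates \<open>\<iota>(g, l)\<close> with \<open>x - g \<in> T\<close> are paired with \<open>J\<close> minus one coordinate \<open>j0\<close>. A point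
  \<open>(x, y)\<close> with \<open>y\<close> in the \<open>M\<close>-box at \<open>\<iota>(g, l)\<close> is tiled along the first coordinate by
  \<open>{(g + t, y) | t \<in> T}\<close>. The other points over \<open>x\<close> are tiled inside \<open>A\<^sup>d\<close>: along \<open>j0\<close> if
  \<open>y\<close> has no coordinate outside \<open>Q\<close> except \<open>j0\<close>, along a paired coordinate if those coordinates
  lie in a pair, and otherwise along the least coordinate outside \<open>Q\<close> with offset \<open>s\<close>, which
  works because \<open>s + T = M \<union> P\<close> avoids \<open>Q\<close>.\<close>

definition tiled_at ::
    "'g::ab_group_add set \<Rightarrow> nat \<Rightarrow> 'g list set \<Rightarrow> ('g list \<Rightarrow> nat) \<Rightarrow> ('g list \<Rightarrow> 'g) \<Rightarrow> 'g list \<Rightarrow> bool"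
  where
  "tiled_at T e X dir base y \<longleftrightarrow> length y = e \<and> dir y < e \<and> y ! dir y - base y \<in> T \<and>
     (\<forall>t\<in>T. y[dir y := base y + t] \<in> X \<and> dir (y[dir y := base y + t]) = dir y \<and>
        base (y[dir y := base y + t]) = base y)"

text \<open>The copy of \<open>T\<close> through \<open>y\<close> is \<open>T_(dir y) + y[dir y := base y]\<close>; since \<open>dir\<close> and
  \<open>base\<close> are constant on it, distinct copies are disjoint.\<close>
definition directed_tiling ::
    "'g::ab_group_add set \<Rightarrow> nat \<Rightarrow> 'g list set \<Rightarrow> ('g list \<Rightarrow> nat) \<Rightarrow> ('g list \<Rightarrow> 'g) \<Rightarrow> bool" where
  "directed_tiling T e X dir base \<longleftrightarrow> (\<forall>y\<in>X. tiled_at T e X dir base y)"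

lemma tilable_if_directed_tiling:
  assumes "directed_tiling T e X dir base"
  shows "tilable T e X"
proof -
  have len: "length y = e" and dir: "dir y < e" and mem: "y ! dir y - base y \<in> T"
    and closed: "\<And>t. t \<in> T \<Longrightarrow> y[dir y := base y + t] \<in> X \<and>
        dir (y[dir y := base y + t]) = dir y \<and> base (y[dir y := base y + t]) = base y"
    if "y \<in> X" for y
    using assms that unfolding directed_tiling_def tiled_at_def by blast+
  define tile where "tile y = {y[dir y := base y + t] | t. t \<in> T}" for y
  have tile_copy: "tile y = copy_of T (dir y) (y[dir y := base y])" if "y \<in> X" for y
    using dir[OF that] len[OF that] by (simp add: tile_def copy_of_def)
  have self: "y \<in> tile y" if "y \<in> X" for y
  proof -
    have "y = y[dir y := base y + (y ! dir y - base y)]" by simp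
    then show ?thesis using mem[OF that] unfolding tile_def by blast
  qed
  have same_tile: "tile w = tile y" if "y \<in> X" "w \<in> tile y" for y w
    using that closed unfolding tile_def by fastforce
  have "tile ` X \<subseteq> copies T e"
  proof
    fix c assume "c \<in> tile ` X"
    then obtain y where "y \<in> X" "c = copy_of T (dir y) (y[dir y := base y])"
      using tile_copy by blast
    moreover have "dir y < e" "length (y[dir y := base y]) = e" using \<open>y \<in> X\<close> dir len by auto
    ultimately show "c \<in> copies T e" unfolding copies_def by blast
  qed
  moreover have "\<Union> (tile ` X) = X"
  proof
    show "\<Union> (tile ` X) \<subseteq> X" using closed unfolding tile_def by auto
    show "X \<subseteq> \<Union> (tile ` X)" using self by blast
  qed
  moreover have "pairwise disjnt (tile ` X)"
  proof (rule pairwiseI)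
    fix c c' assume "c \<in> tile ` X" "c' \<in> tile ` X" "c \<noteq> c'"
    then obtain y y' where "y \<in> X" "y' \<in> X" "c = tile y" "c' = tile y'" by blast
    then show "disjnt c c'"
      using same_tile \<open>c \<noteq> c'\<close> unfolding disjnt_def by (metis disjoint_iff)
  qed
  ultimately show ?thesis unfolding tilable_def by blast
qed

lemma tilable_singleton:
  assumes "\<And>y. y \<in> X \<Longrightarrow> length y = Suc e"
  shows "tilable {t0} (Suc e) X"
proof (rule tilable_if_directed_tiling)
  show "directed_tiling {t0} (Suc e) X (\<lambda>_. 0) (\<lambda>y. y ! 0 - t0)"
    using assms unfolding directed_tiling_def tiled_at_def by simp
qed

definition box :: "'g set \<Rightarrow> nat \<Rightarrow> 'g set \<Rightarrow> nat \<Rightarrow> 'g list set" where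
  "box Q d V j = {y. length y = d \<and> y ! j \<in> V \<and> (\<forall>l<d. l \<noteq> j \<longrightarrow> y ! l \<in> Q)}"

lemma box_index_unique:
  "y \<in> box Q d V i \<Longrightarrow> y \<in> box Q d W j \<Longrightarrow> i < d \<Longrightarrow> Q \<inter> V = {} \<Longrightarrow> i = j"
  unfolding box_def by auto

lemma box_subset_power_set: "box Q d V j \<subseteq> power_set (Q \<union> V) d"
  unfolding box_def power_set_def by (auto simp: in_set_conv_nth)

lemma inj_on_box:
  assumes "Q \<inter> V = {}" and "Q \<noteq> {}" and "V \<noteq> {}"
  shows "inj_on (box Q d V) {..<d}"
proof (rule inj_onI)
  fix i j assume i: "i \<in> {..<d}" and j: "j \<in> {..<d}" and eq: "box Q d V i = box Q d V j"
  obtain a v where "a \<in> Q" "v \<in> V" using assms by blast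
  then have "map (\<lambda>l. if l = i then v else a) [0..<d] \<in> box Q d V i"
    using i unfolding box_def by auto
  then show "i = j" using box_index_unique[of _ Q d V i V j] eq i assms(1) by auto
qed

locale shift_partition =
  fixes T Q M P :: "'g::ab_group_add set" and s :: 'g
  assumes T_split: "T = Q \<union> M" and translate_split: "(\<lambda>t. s + t) ` T = M \<union> P"
    and Q_M: "Q \<inter> M = {}" and Q_P: "Q \<inter> P = {}" and M_P: "M \<inter> P = {}"
begin

lemma translate_mem: "t \<in> T \<Longrightarrow> s + t \<in> M \<union> P"
  using translate_split by blast

lemma T_disjoint_P: "T \<inter> P = {}"
  using T_split Q_P M_P by blast

lemma untranslate_mem: "v \<in> M \<union> P \<Longrightarrow> v - s \<in> T"
  using translate_split by (force simp: algebra_simps)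

end

locale layer = shift_partition +
  fixes d :: nat and I J :: "nat set" and j0 :: nat and pi :: "nat \<Rightarrow> nat"
  assumes I_J: "I \<inter> J = {}" and J_bound: "J \<subseteq> {..<d}" and j0: "j0 \<in> J"
    and pi_bij: "bij_betw pi I (J - {j0})" and pi_greater: "\<And>i. i \<in> I \<Longrightarrow> i < pi i"
begin

definition pii :: "nat \<Rightarrow> nat" where "pii = the_inv_into I pi"

lemma pi_mem: "i \<in> I \<Longrightarrow> pi i \<in> J \<and> pi i \<noteq> j0"
  using pi_bij by (auto simp: bij_betw_def)

lemma pii_pi: "i \<in> I \<Longrightarrow> pii (pi i) = i"
  using pi_bij by (simp add: pii_def bij_betw_def the_inv_into_f_f)

lemma pi_pii: "j \<in> J \<Longrightarrow> j \<noteq> j0 \<Longrightarrow> pii j \<in> I \<and> pi (pii j) = j"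
proof -
  assume "j \<in> J" "j \<noteq> j0"
  then have inj: "inj_on pi I" and im: "j \<in> pi ` I"
    using pi_bij by (auto simp: bij_betw_def)
  show ?thesis
    unfolding pii_def using the_inv_into_into[OF inj im] f_the_inv_into_f[OF inj im] by simp
qed

lemma I_bound: "i \<in> I \<Longrightarrow> i < d"
  using pi_mem pi_greater J_bound by fastforce

definition support where
  "support y = {l. l < length y \<and> y ! l \<notin> Q}"

definition region where
  "region = {y. length y = d \<and> set y \<subseteq> Q \<union> M \<union> P \<and>
     (\<forall>j\<in>J. y \<notin> box Q d P j) \<and> (\<forall>i\<in>I. y \<notin> box Q d M i)}"

definition dir where
  "dir y = (let N = support y; f = Min N in
     if N = {} then j0
     else if card N = 1 then (if f = j0 then j0 else if f \<in> J then pii f else if f \<in> I then pi f else f)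
     else if f \<in> I \<and> N = {f, pi f} \<and> y ! pi f \<in> M then (if y ! f \<in> M then f else pi f)
     else f)"

definition base where
  "base y = (let N = support y; f = Min N in
     if N = {} then 0
     else if card N = 1 then (if f \<in> J \<or> f \<in> I then 0 else s)
     else if f \<in> I \<and> N = {f, pi f} \<and> y ! pi f \<in> M then 0
     else s)"

lemma finite_support: "finite (support y)"
  unfolding support_def by simp

lemma support_update:
  "p < length y \<Longrightarrow> support (y[p := v]) = (if v \<in> Q then support y - {p} else insert p (support y))"
  unfolding support_def by (auto simp: nth_list_update)

lemma region_iff:
  "y \<in> region \<longleftrightarrow> length y = d \<and> set y \<subseteq> Q \<union> M \<union> P \<and>
     (\<forall>j\<in>J. \<not> (support y = {j} \<and> y ! j \<in> P)) \<and> (\<forall>i\<in>I. \<not> (support y = {i} \<and> y ! i \<in> M))"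
proof (cases "length y = d")
  case True
  have box_iff: "y \<in> box Q d V j \<longleftrightarrow> support y = {j} \<and> y ! j \<in> V"
    if "j < d" and "V \<inter> Q = {}" for V j
    using True that unfolding box_def support_def by auto
  have "(\<forall>j\<in>J. y \<notin> box Q d P j) \<longleftrightarrow> (\<forall>j\<in>J. \<not> (support y = {j} \<and> y ! j \<in> P))"
    using box_iff J_bound Q_P by blast
  moreover have "(\<forall>i\<in>I. y \<notin> box Q d M i) \<longleftrightarrow> (\<forall>i\<in>I. \<not> (support y = {i} \<and> y ! i \<in> M))"
    using box_iff I_bound Q_M by blast
  ultimately show ?thesis unfolding region_def using True by simp
qed (simp add: region_def)

lemma region_length: "y \<in> region \<Longrightarrow> length y = d"
  unfolding region_def by simp

lemma region_coordinate: "y \<in> region \<Longrightarrow> l < d \<Longrightarrow> y ! l \<in> Q \<union> M \<union> P"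
  unfolding region_iff by (auto simp: set_conv_nth)

lemma region_outside_support: "y \<in> region \<Longrightarrow> l < d \<Longrightarrow> l \<notin> support y \<Longrightarrow> y ! l \<in> Q"
  unfolding region_iff support_def by auto

lemma region_update:
  assumes "y \<in> region" and "p < d" and "v \<in> Q \<union> M \<union> P"
    and "\<And>j. j \<in> J \<Longrightarrow> support (y[p := v]) = {j} \<Longrightarrow> y[p := v] ! j \<notin> P"
    and "\<And>i. i \<in> I \<Longrightarrow> support (y[p := v]) = {i} \<Longrightarrow> y[p := v] ! i \<notin> M"
  shows "y[p := v] \<in> region"
proof -
  have "set (y[p := v]) \<subseteq> Q \<union> M \<union> P"
    using assms(1,3) set_update_subset_insert[of y p v] unfolding region_iff by blast
  then show ?thesis using assms unfolding region_iff by auto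
qed

lemma dir_base_single:
  "support y = {f} \<Longrightarrow>
     dir y = (if f = j0 then j0 else if f \<in> J then pii f else if f \<in> I then pi f else f) \<and>
     base y = (if f \<in> J \<or> f \<in> I then 0 else s)"
  unfolding dir_def base_def by simp

lemma dir_base_pair:
  assumes "i \<in> I" and "support y = {i, pi i}" and "y ! pi i \<in> M"
  shows "dir y = (if y ! i \<in> M then i else pi i) \<and> base y = 0"
  using assms pi_greater[OF assms(1)] unfolding dir_def base_def by (simp add: Let_def)

lemma dir_base_axis:
  assumes "support y \<subseteq> {j0}"
  shows "dir y = j0 \<and> base y = 0"
proof (cases "support y = {}")
  case True
  then show ?thesis by (simp add: dir_def base_def)
next
  case False
  then have "support y = {j0}" using assms by auto
  then show ?thesis using dir_base_single[of y j0] j0 by simp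
qed

definition shift_class where
  "shift_class f y \<longleftrightarrow> support y \<noteq> {} \<and> f = Min (support y) \<and>
     (support y = {f} \<longrightarrow> f \<notin> I \<union> J) \<and> \<not> (f \<in> I \<and> support y = {f, pi f} \<and> y ! pi f \<in> M)"

lemma dir_base_shift:
  assumes "shift_class f y"
  shows "dir y = f \<and> base y = s"
proof (cases "card (support y) = 1")
  case True
  then have "support y = {f}"
    using assms unfolding shift_class_def by (metis card_1_singletonE Min_singleton)
  then show ?thesis using assms j0 dir_base_single[of y f] unfolding shift_class_def by auto
next
  case False
  from assms have "support y \<noteq> {}" and f: "Min (support y) = f"
    and "\<not> (f \<in> I \<and> support y = {f, pi f} \<and> y ! pi f \<in> M)"
    unfolding shift_class_def by auto
  then show ?thesis unfolding dir_def base_def Let_def f using False by auto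
qed

definition tile_class where
  "tile_class C p b \<longleftrightarrow> (\<forall>y\<in>region. C y \<longrightarrow> p < d \<and> dir y = p \<and> base y = b \<and> y ! p - b \<in> T \<and>
     (\<forall>t\<in>T. y[p := b + t] \<in> region \<and> C (y[p := b + t])))"

lemma directed_tiling_at:
  assumes "tile_class C p b" and "y \<in> region" and "C y"
  shows "tiled_at T d region dir base y"
proof -
  have at: "p < d \<and> dir y' = p \<and> base y' = b \<and> y' ! p - b \<in> T \<and>
      (\<forall>t\<in>T. y'[p := b + t] \<in> region \<and> C (y'[p := b + t]))"
    if "y' \<in> region" and "C y'" for y'
    using assms(1) that unfolding tile_class_def by blast
  then have "p < d" "dir y = p" "base y = b" "y ! p - b \<in> T"
    and step: "\<forall>t\<in>T. y[p := b + t] \<in> region \<and> C (y[p := b + t])"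
    using assms(2,3) by blast+
  moreover have "dir (y[p := b + t]) = p \<and> base (y[p := b + t]) = b" if "t \<in> T" for t
    using at[of "y[p := b + t]"] step that by blast
  ultimately show ?thesis using region_length[OF assms(2)] unfolding tiled_at_def by simp
qed

lemma tile_class_axis: "tile_class (\<lambda>y. support y \<subseteq> {j0}) j0 0"
  unfolding tile_class_def
proof (intro ballI impI conjI)
  fix y assume y: "y \<in> region" and C: "support y \<subseteq> {j0}"
  have j0d: "j0 < d" using j0 J_bound by auto
  have len: "length y = d" using y by (rule region_length)
  show "j0 < d" by (rule j0d)
  show "dir y = j0" "base y = 0" using dir_base_axis[OF C] by auto
  have "y ! j0 \<in> T"
  proof (cases "j0 \<in> support y")
    case True
    then have "support y = {j0}" using C by auto
    then have "y ! j0 \<notin> P" using y j0 unfolding region_iff by blast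
    then show ?thesis using region_coordinate[OF y j0d] T_split by auto
  next
    case False
    then show ?thesis using region_outside_support[OF y j0d] T_split by auto
  qed
  then show "y ! j0 - 0 \<in> T" by simp
  fix t assume t: "t \<in> T"
  show sup: "support (y[j0 := 0 + t]) \<subseteq> {j0}"
    using C support_update[of j0 y "0 + t"] len j0d by auto
  show "y[j0 := 0 + t] \<in> region"
  proof (rule region_update[OF y j0d])
    show "0 + t \<in> Q \<union> M \<union> P" using t T_split by auto
  next
    fix j assume "j \<in> J" "support (y[j0 := 0 + t]) = {j}"
    then have "j = j0" using sup by auto
    then show "y[j0 := 0 + t] ! j \<notin> P" using t len j0d T_disjoint_P by auto
  next
    fix i assume "i \<in> I" "support (y[j0 := 0 + t]) = {i}"
    then show "y[j0 := 0 + t] ! i \<notin> M" using sup j0 I_J by auto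
  qed
qed

lemma tile_class_pair_low:
  assumes i: "i \<in> I"
  shows "tile_class (\<lambda>y. support y \<subseteq> {i, pi i} \<and> y ! pi i \<in> M \<and> y ! i \<in> T) i 0"
  unfolding tile_class_def
proof (intro ballI impI conjI)
  fix y assume y: "y \<in> region" and C: "support y \<subseteq> {i, pi i} \<and> y ! pi i \<in> M \<and> y ! i \<in> T"
  have pi: "pi i \<in> J" "pi i \<noteq> j0" "i < pi i" "pi i < d"
    using pi_mem[OF i] pi_greater[OF i] J_bound by auto
  have len: "length y = d" using y by (rule region_length)
  show "i < d" using pi by simp
  have pi_sup: "pi i \<in> support y" using C Q_M len pi unfolding support_def by auto
  have "dir y = i \<and> base y = 0"
  proof (cases "i \<in> support y")
    case True
    then have "y ! i \<in> M" using C T_split unfolding support_def by auto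
    moreover have "support y = {i, pi i}" using True C pi_sup by auto
    ultimately show ?thesis using dir_base_pair[OF i] C by simp
  next
    case False
    then have "support y = {pi i}" using C pi_sup by auto
    then show ?thesis using dir_base_single pi pii_pi[OF i] by simp
  qed
  then show "dir y = i" "base y = 0" by auto
  show "y ! i - 0 \<in> T" using C by simp
  fix t assume t: "t \<in> T"
  have y_pi: "y[i := 0 + t] ! pi i = y ! pi i" using pi by simp
  have sup: "support (y[i := 0 + t]) \<subseteq> {i, pi i}"
    using C support_update[of i y "0 + t"] len pi by auto
  have pi_sup': "pi i \<in> support (y[i := 0 + t])"
    using y_pi C Q_M len pi unfolding support_def by auto
  show "support (y[i := 0 + t]) \<subseteq> {i, pi i}" "y[i := 0 + t] ! pi i \<in> M" "y[i := 0 + t] ! i \<in> T"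
    using sup y_pi C t len pi by auto
  show "y[i := 0 + t] \<in> region"
  proof (rule region_update[OF y])
    show "i < d" "0 + t \<in> Q \<union> M \<union> P" using pi t T_split by auto
  next
    fix j assume "j \<in> J" "support (y[i := 0 + t]) = {j}"
    then have "j = pi i" using pi_sup' by auto
    then show "y[i := 0 + t] ! j \<notin> P" using y_pi C M_P by auto
  next
    fix i' assume "i' \<in> I" "support (y[i := 0 + t]) = {i'}"
    then have "i' = pi i" using pi_sup' by auto
    then show "y[i := 0 + t] ! i' \<notin> M" using \<open>i' \<in> I\<close> pi I_J by auto
  qed
qed

lemma tile_class_pair_high:
  assumes i: "i \<in> I"
  shows "tile_class (\<lambda>y. support y \<subseteq> {i, pi i} \<and> y ! i \<in> P \<and> y ! pi i \<in> T) (pi i) 0"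
  unfolding tile_class_def
proof (intro ballI impI conjI)
  fix y assume y: "y \<in> region" and C: "support y \<subseteq> {i, pi i} \<and> y ! i \<in> P \<and> y ! pi i \<in> T"
  have pi: "pi i \<in> J" "pi i \<noteq> j0" "i < pi i" "pi i < d"
    using pi_mem[OF i] pi_greater[OF i] J_bound by auto
  have i_J: "i \<notin> J" "i \<noteq> j0" using i I_J j0 by auto
  have len: "length y = d" using y by (rule region_length)
  show "pi i < d" using pi by simp
  have i_sup: "i \<in> support y" using C Q_P len pi unfolding support_def by auto
  have "dir y = pi i \<and> base y = 0"
  proof (cases "pi i \<in> support y")
    case True
    then have "y ! pi i \<in> M" using C T_split unfolding support_def by auto
    moreover have "support y = {i, pi i}" using True C i_sup by auto
    ultimately show ?thesis using dir_base_pair[OF i] C M_P by auto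
  next
    case False
    then have "support y = {i}" using C i_sup by auto
    then show ?thesis using dir_base_single i i_J by simp
  qed
  then show "dir y = pi i" "base y = 0" by auto
  show "y ! pi i - 0 \<in> T" using C by simp
  fix t assume t: "t \<in> T"
  have y_i: "y[pi i := 0 + t] ! i = y ! i" using pi by simp
  have sup: "support (y[pi i := 0 + t]) \<subseteq> {i, pi i}"
    using C support_update[of "pi i" y "0 + t"] len pi by auto
  have i_sup': "i \<in> support (y[pi i := 0 + t])"
    using y_i C Q_P len pi unfolding support_def by auto
  show "support (y[pi i := 0 + t]) \<subseteq> {i, pi i}" "y[pi i := 0 + t] ! i \<in> P"
    "y[pi i := 0 + t] ! pi i \<in> T"
    using sup y_i C t len pi by auto
  show "y[pi i := 0 + t] \<in> region"
  proof (rule region_update[OF y])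
    show "pi i < d" "0 + t \<in> Q \<union> M \<union> P" using pi t T_split by auto
  next
    fix j assume "j \<in> J" "support (y[pi i := 0 + t]) = {j}"
    then show "y[pi i := 0 + t] ! j \<notin> P" using i_sup' i_J by auto
  next
    fix i' assume "i' \<in> I" "support (y[pi i := 0 + t]) = {i'}"
    then have "i' = i" using i_sup' by auto
    then show "y[pi i := 0 + t] ! i' \<notin> M" using y_i C M_P by auto
  qed
qed

lemma tile_class_shift: "tile_class (shift_class f) f s"
  unfolding tile_class_def
proof (intro ballI impI conjI)
  fix y assume y: "y \<in> region" and C: "shift_class f y"
  have len: "length y = d" using y by (rule region_length)
  have "f \<in> support y" using C Min_in[OF finite_support] unfolding shift_class_def by auto
  then have fd: "f < d" and yf: "y ! f \<notin> Q" using len unfolding support_def by auto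
  show "f < d" by (rule fd)
  show "dir y = f" "base y = s" using dir_base_shift[OF C] by auto
  show "y ! f - s \<in> T" using region_coordinate[OF y fd] yf untranslate_mem by blast
  fix t assume t: "t \<in> T"
  have st: "s + t \<notin> Q" "s + t \<in> Q \<union> M \<union> P" using translate_mem[OF t] Q_M Q_P by auto
  have sup: "support (y[f := s + t]) = support y"
    using support_update[of f y "s + t"] len fd st \<open>f \<in> support y\<close> by auto
  have "y[f := s + t] ! pi f = y ! pi f" if "f \<in> I"
    using pi_greater[OF that] by simp
  then show shift: "shift_class f (y[f := s + t])" using C sup unfolding shift_class_def by auto
  show "y[f := s + t] \<in> region"
  proof (rule region_update[OF y fd st(2)])
    fix j assume "j \<in> J" "support (y[f := s + t]) = {j}"
    then show "y[f := s + t] ! j \<notin> P" using shift unfolding shift_class_def by auto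
  next
    fix i assume "i \<in> I" "support (y[f := s + t]) = {i}"
    then show "y[f := s + t] ! i \<notin> M" using shift unfolding shift_class_def by auto
  qed
qed

lemma region_classes:
  assumes y: "y \<in> region"
  obtains "support y \<subseteq> {j0}"
  | i where "i \<in> I" "support y \<subseteq> {i, pi i}" "y ! pi i \<in> M" "y ! i \<in> T"
  | i where "i \<in> I" "support y \<subseteq> {i, pi i}" "y ! i \<in> P" "y ! pi i \<in> T"
  | "shift_class (Min (support y)) y"
proof -
  define f where "f = Min (support y)"
  have len: "length y = d" using y by (rule region_length)
  consider (empty) "support y = {}" | (single) "support y = {f}" "f \<in> I \<union> J"
    | (pair) "f \<in> I" "support y = {f, pi f}" "y ! pi f \<in> M" | (shift) "shift_class f y"
    unfolding shift_class_def f_def by blast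
  then show thesis
  proof cases
    case empty
    then show ?thesis using that(1) by simp
  next
    case single
    have fd: "f < d" and "y ! f \<notin> Q" using single(1) len unfolding support_def by auto
    then have yf: "y ! f \<in> M \<union> P" using region_coordinate[OF y fd] by auto
    show ?thesis
    proof (cases "f \<in> J")
      case fJ: True
      show ?thesis
      proof (cases "f = j0")
        case True
        then show ?thesis using that(1) single by simp
      next
        case False
        define i where "i = pii f"
        have i: "i \<in> I" "pi i = f" using pi_pii[OF fJ False] i_def by auto
        have "y ! f \<in> M" using yf single(1) y fJ unfolding region_iff by auto
        moreover have "y ! i \<in> Q"
          using region_outside_support[OF y I_bound[OF i(1)]] single(1) i pi_greater[OF i(1)] by auto
        ultimately show ?thesis using that(2)[OF i(1)] i single(1) T_split by auto
      qed
    next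
      case False
      then have fI: "f \<in> I" using single by auto
      have "y ! f \<in> P" using yf single(1) y fI unfolding region_iff by auto
      moreover have "y ! pi f \<in> Q"
        using region_outside_support[OF y] pi_greater[OF fI] pi_mem[OF fI] J_bound single(1) by auto
      ultimately show ?thesis using that(3)[OF fI] single(1) T_split by auto
    qed
  next
    case pair
    have "f < d" "y ! f \<notin> Q" using pair(2) len unfolding support_def by auto
    then have "y ! f \<in> M \<union> P" using region_coordinate[OF y] by auto
    then show ?thesis using that(2)[OF pair(1)] that(3)[OF pair(1)] pair T_split by auto
  next
    case shift
    then show ?thesis using that(4) f_def by simp
  qed
qed

lemma directed_tiling_region: "directed_tiling T d region dir base"
  unfolding directed_tiling_def
proof
  fix y assume y: "y \<in> region"
  show "tiled_at T d region dir base y"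
  proof (cases rule: region_classes[OF y])
    case 1
    then show ?thesis by (rule directed_tiling_at[OF tile_class_axis y])
  next
    case (2 i)
    then show ?thesis using directed_tiling_at[OF tile_class_pair_low[OF 2(1)] y] by blast
  next
    case (3 i)
    then show ?thesis using directed_tiling_at[OF tile_class_pair_high[OF 3(1)] y] by blast
  next
    case 4
    then show ?thesis by (rule directed_tiling_at[OF tile_class_shift y])
  qed
qed

end

text \<open>Over each \<open>x\<close>, the coordinates \<open>reserved x\<close> play the role of \<open>I\<close> in a \<open>layer\<close>: their
  \<open>M\<close>-boxes are tiled along the extra first coordinate instead.\<close>
locale stacked = shift_partition T Q M P s for T Q M P :: "'g::ab_group_add set" and s +
  fixes d q :: nat and J :: "nat set" and j0 :: nat
    and iota :: "'g \<times> nat \<Rightarrow> nat" and pi :: "'g \<Rightarrow> nat \<Rightarrow> nat"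
  assumes iota_inj: "inj_on iota (UNIV \<times> {..<q})"
    and layers: "\<And>x. layer_axioms d (iota ` ({g. x - g \<in> T} \<times> {..<q})) J j0 (pi x)"
begin

definition reserved :: "'g \<Rightarrow> nat set" where
  "reserved x = iota ` ({g. x - g \<in> T} \<times> {..<q})"

lemma layer_reserved: "layer T Q M P s d (reserved x) J j0 (pi x)"
  unfolding layer_def reserved_def using shift_partition_axioms layers by blast

lemma reserved_bound: "i \<in> reserved x \<Longrightarrow> i < d"
  by (rule layer.I_bound[OF layer_reserved])

definition in_reserved_box :: "'g \<Rightarrow> 'g list \<Rightarrow> bool" where
  "in_reserved_box x y \<longleftrightarrow> (\<exists>i\<in>reserved x. y \<in> box Q d M i)"

definition box_owner :: "'g list \<Rightarrow> 'g" where
  "box_owner y = (SOME g. \<exists>l<q. y \<in> box Q d M (iota (g, l)))"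

lemma box_owner_eq:
  assumes "l < q" and "x - g \<in> T" and "y \<in> box Q d M (iota (g, l))"
  shows "box_owner y = g"
proof -
  have bound: "iota (g, l) < d" using assms reserved_bound unfolding reserved_def by blast
  have unique: "g' = g" if "l' < q" and "y \<in> box Q d M (iota (g', l'))" for g' l'
  proof -
    have "iota (g', l') = iota (g, l)"
      using box_index_unique[OF assms(3) that(2) bound Q_M] by simp
    then show ?thesis using iota_inj assms(1) that(1) by (auto dest: inj_onD)
  qed
  have "\<exists>l<q. y \<in> box Q d M (iota (box_owner y, l))"
    unfolding box_owner_def by (rule someI[of _ g]) (use assms in blast)
  then show ?thesis using unique by blast
qed

definition cylinder :: "'g list set" where
  "cylinder = {g # xs | g xs. xs \<in> power_set (Q \<union> M \<union> P) d - \<Union> (box Q d P ` J)}"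

abbreviation "region_of x \<equiv> layer.region Q M P d (reserved x) J"
abbreviation "dir_of x \<equiv> layer.dir Q M (reserved x) J j0 (pi x)"
abbreviation "base_of x \<equiv> layer.base Q M s (reserved x) J (pi x)"

lemma region_of_eq:
  "region_of x = power_set (Q \<union> M \<union> P) d - \<Union> (box Q d P ` J) - {y. in_reserved_box x y}"
  unfolding layer.region_def[OF layer_reserved] in_reserved_box_def power_set_def by auto

definition full_dir :: "'g list \<Rightarrow> nat" where
  "full_dir z = (if in_reserved_box (hd z) (tl z) then 0 else Suc (dir_of (hd z) (tl z)))"

definition full_base :: "'g list \<Rightarrow> 'g" where
  "full_base z = (if in_reserved_box (hd z) (tl z) then box_owner (tl z) else base_of (hd z) (tl z))"

lemma tiled_at_in_reserved_box:
  assumes y: "y \<in> power_set (Q \<union> M \<union> P) d - \<Union> (box Q d P ` J)" and "in_reserved_box x y"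
  shows "tiled_at T (Suc d) cylinder full_dir full_base (x # y)"
proof -
  obtain g l where gl: "l < q" "x - g \<in> T" "y \<in> box Q d M (iota (g, l))"
    using assms(2) unfolding in_reserved_box_def reserved_def by blast
  have moved: "in_reserved_box (g + t) y" if "t \<in> T" for t
    using gl that unfolding in_reserved_box_def reserved_def by force
  have "length y = d" using y unfolding power_set_def by simp
  moreover have "(g + t) # y \<in> cylinder" for t using y unfolding cylinder_def by blast
  ultimately show ?thesis using gl(2) box_owner_eq[OF gl] moved assms(2)
    unfolding tiled_at_def full_dir_def full_base_def by simp
qed

lemma tiled_at_not_in_reserved_box:
  assumes "y \<in> power_set (Q \<union> M \<union> P) d - \<Union> (box Q d P ` J)" and "\<not> in_reserved_box x y"
  shows "tiled_at T (Suc d) cylinder full_dir full_base (x # y)"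
proof -
  have "tiled_at T d (region_of x) (dir_of x) (base_of x) y"
    using layer.directed_tiling_region[OF layer_reserved] assms region_of_eq
    unfolding directed_tiling_def by blast
  moreover have "x # y' \<in> cylinder \<and> \<not> in_reserved_box x y'" if "y' \<in> region_of x" for y'
    using that region_of_eq unfolding cylinder_def by blast
  ultimately show ?thesis using assms(2)
    unfolding tiled_at_def full_dir_def full_base_def by auto
qed

lemma tilable_cylinder: "tilable T (Suc d) cylinder"
proof (rule tilable_if_directed_tiling)
  show "directed_tiling T (Suc d) cylinder full_dir full_base"
    unfolding directed_tiling_def
  proof
    fix z assume "z \<in> cylinder"
    then obtain x y where "z = x # y" and "y \<in> power_set (Q \<union> M \<union> P) d - \<Union> (box Q d P ` J)"
      unfolding cylinder_def by blast
    then show "tiled_at T (Suc d) cylinder full_dir full_base z"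
      using tiled_at_in_reserved_box tiled_at_not_in_reserved_box by blast
  qed
qed

end

lemma card_translates:
  fixes T :: "'g::ab_group_add set"
  shows "card {g. x - g \<in> T} = card T"
proof -
  have "{g. x - g \<in> T} = (\<lambda>t. x - t) ` T" by (force simp: algebra_simps)
  moreover have "inj_on (\<lambda>t. x - t) T" by (rule inj_onI) simp
  ultimately show ?thesis by (simp add: card_image)
qed

lemma exists_bij_betw_family:
  assumes "finite B" and "\<And>x. finite (A x)" and "\<And>x. card (A x) = card B"
  shows "\<exists>f. \<forall>x. bij_betw (f x) (A x) B"
proof -
  have "\<forall>x. \<exists>h. bij_betw h (A x) B" using finite_same_card_bij assms by blast
  then show ?thesis by metis
qed

lemma ex_stacked:
  fixes T Q M P :: "'g::{ab_group_add, finite} set"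
  assumes part: "shift_partition T Q M P s" and k: "2 \<le> card T"
    and J: "J \<subseteq> {N..<d}" and N: "card (UNIV :: 'g set) * card J \<le> N"
    and card_J: "card J mod card T = 1"
  shows "\<exists>q j0 iota pi. stacked T Q M P s d q J j0 iota pi"
proof -
  define q where "q = card J div card T"
  have card_J': "card J = card T * q + 1"
    using card_J unfolding q_def by (metis div_mult_mod_eq mult.commute)
  have "finite J" using J finite_subset by blast
  have "J \<noteq> {}" using card_J' by auto
  then obtain j0 where j0: "j0 \<in> J" by blast
  have "1 * q \<le> card T * q" using k by (intro mult_le_mono1) simp
  then have "q \<le> card J" using card_J' by linarith
  then have "card (UNIV :: 'g set) * q \<le> N" using N by (meson mult_le_mono2 order_trans)
  then have card_le: "card ((UNIV :: 'g set) \<times> {..<q}) \<le> card {..<N}"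
    by (simp add: card_cartesian_product)
  obtain iota :: "'g \<times> nat \<Rightarrow> nat"
    where iota: "inj_on iota (UNIV \<times> {..<q})" "iota ` (UNIV \<times> {..<q}) \<subseteq> {..<N}"
    using card_le_inj[OF _ _ card_le] by auto
  let ?reserved = "\<lambda>x. iota ` ({g. x - g \<in> T} \<times> {..<q})"
  have "card (?reserved x) = card (J - {j0})" for x
  proof -
    have "inj_on iota ({g. x - g \<in> T} \<times> {..<q})" using iota(1) by (rule inj_on_subset) auto
    then have "card (?reserved x) = card T * q"
      by (simp add: card_image card_cartesian_product card_translates)
    then show ?thesis using card_J' j0 \<open>finite J\<close> by simp
  qed
  then obtain pi where pi: "\<And>x. bij_betw (pi x) (?reserved x) (J - {j0})"
    using exists_bij_betw_family[of "J - {j0}" ?reserved] \<open>finite J\<close> by auto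
  have reserved_N: "?reserved x \<subseteq> {..<N}" for x using iota(2) by auto
  have "layer_axioms d (?reserved x) J j0 (pi x)" for x
  proof
    show "?reserved x \<inter> J = {}" using reserved_N J by fastforce
    show "J \<subseteq> {..<d}" using J by auto
    show "j0 \<in> J" by (rule j0)
    show "bij_betw (pi x) (?reserved x) (J - {j0})" by (rule pi)
  next
    fix i assume "i \<in> ?reserved x"
    then have "i < N" "pi x i \<in> J" using reserved_N pi[of x] by (auto simp: bij_betw_def)
    then show "i < pi x i" using J by fastforce
  qed
  then have "stacked T Q M P s d q J j0 iota pi"
    using part iota(1) by (simp add: stacked_def stacked_axioms_def)
  then show ?thesis by blast
qed

lemma tilable_cylinder_minus_boxes:
  fixes T Q M P :: "'g::{ab_group_add, finite} set"
  assumes part: "shift_partition T Q M P s" and "T \<noteq> {}"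
    and J: "J \<subseteq> {N..<d}" and N: "card (UNIV :: 'g set) * card J \<le> N"
    and card_J: "card J mod card T = 1 mod card T"
  shows "tilable T (Suc d) {g # xs | g xs. xs \<in> power_set (Q \<union> M \<union> P) d - \<Union> (box Q d P ` J)}"
proof (cases "card T = 1")
  case True
  then obtain t0 where "T = {t0}" by (rule card_1_singletonE)
  then show ?thesis by (auto intro: tilable_singleton simp: power_set_def)
next
  case False
  moreover have "card T > 0" using \<open>T \<noteq> {}\<close> by (simp add: card_gt_0_iff)
  ultimately have "2 \<le> card T" by linarith
  then obtain q j0 iota pi where st: "stacked T Q M P s d q J j0 iota pi"
    using ex_stacked[OF part _ J N] card_J by auto
  show ?thesis using stacked.tilable_cylinder[OF st] unfolding stacked.cylinder_def[OF st] .
qed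

lemma exists_translate_ne:
  fixes T :: "'g::group_add set"
  assumes "T \<noteq> {}" and "T \<noteq> UNIV"
  shows "\<exists>s. (\<lambda>t. s + t) ` T \<noteq> T"
proof (rule ccontr)
  assume "\<not> ?thesis"
  then have invariant: "(\<lambda>t. s + t) ` T = T" for s by blast
  obtain t0 where "t0 \<in> T" using assms(1) by blast
  have "g \<in> T" for g
  proof -
    have "(g - t0) + t0 \<in> (\<lambda>t. (g - t0) + t) ` T" using \<open>t0 \<in> T\<close> by blast
    then show ?thesis using invariant by simp
  qed
  then show False using assms(2) by blast
qed

lemma shift_partition_translate:
  "shift_partition T (T - (\<lambda>t. s + t) ` T) (T \<inter> (\<lambda>t. s + t) ` T) ((\<lambda>t. s + t) ` T - T) s"
  by unfold_locales auto

lemma translate_incomparable: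
  fixes T :: "'g::group_add set"
  assumes "finite T" and "(\<lambda>t. s + t) ` T \<noteq> T"
  shows "\<not> (\<lambda>t. s + t) ` T \<subseteq> T" and "\<not> T \<subseteq> (\<lambda>t. s + t) ` T"
proof -
  have card: "card ((\<lambda>t. s + t) ` T) = card T" by (rule card_image) (simp add: inj_on_def)
  show "\<not> (\<lambda>t. s + t) ` T \<subseteq> T" using card_subset_eq[OF assms(1) _ card] assms(2) by blast
  show "\<not> T \<subseteq> (\<lambda>t. s + t) ` T"
    using card_subset_eq[OF finite_imageI[OF assms(1)] _ card[symmetric]] assms(2) by blast
qed

lemma exists_box_family:
  fixes T Q M P :: "'g::{ab_group_add, finite} set"
  assumes part: "shift_partition T Q M P s" and "T \<noteq> {}" and "Q \<noteq> {}" and "P \<noteq> {}"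
  shows "\<exists>d F. d \<ge> d0 \<and> card F \<ge> d0 \<and> finite F \<and>
    (\<forall>S\<in>F. S \<subseteq> power_set (Q \<union> M \<union> P) d) \<and> pairwise disjnt F \<and>
    (\<forall>S. S \<subseteq> F \<and> card S mod card T = 1 mod card T \<longrightarrow>
       tilable T (Suc d) {g # xs | g xs. xs \<in> power_set (Q \<union> M \<union> P) d - \<Union>S})"
proof -
  interpret shift_partition T Q M P s by (rule part)
  define N where "N = card (UNIV :: 'g set) * d0"
  define d where "d = N + d0"
  define F where "F = box Q d P ` {N..<d}"
  have inj: "inj_on (box Q d P) {N..<d}"
    using inj_on_box[OF Q_P \<open>Q \<noteq> {}\<close> \<open>P \<noteq> {}\<close>, of d] by (rule inj_on_subset) auto
  have "d0 \<le> d" "finite F" unfolding d_def F_def by simp_all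
  moreover have "d0 \<le> card F"
  proof -
    have "card F = card {N..<d}" unfolding F_def by (rule card_image[OF inj])
    then show ?thesis unfolding d_def by simp
  qed
  moreover have "S \<subseteq> power_set (Q \<union> M \<union> P) d" if "S \<in> F" for S
    using that box_subset_power_set unfolding F_def power_set_def by fastforce
  moreover have "pairwise disjnt F"
  proof (rule pairwiseI)
    fix S S' assume "S \<in> F" "S' \<in> F" "S \<noteq> S'"
    obtain i j where i: "i < d" and S: "S = box Q d P i" "S' = box Q d P j"
      using \<open>S \<in> F\<close> \<open>S' \<in> F\<close> unfolding F_def by auto
    then have "i \<noteq> j" using \<open>S \<noteq> S'\<close> by auto
    then show "disjnt S S'"
      using box_index_unique[of _ Q d P i P j, OF _ _ i Q_P] S unfolding disjnt_def by blast
  qed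
  moreover have "tilable T (Suc d) {g # xs | g xs. xs \<in> power_set (Q \<union> M \<union> P) d - \<Union>S}"
    if "S \<subseteq> F" and "card S mod card T = 1 mod card T" for S
  proof -
    define J where "J = {j \<in> {N..<d}. box Q d P j \<in> S}"
    have J: "J \<subseteq> {N..<d}" unfolding J_def by auto
    have S: "S = box Q d P ` J" using that(1) unfolding J_def F_def by auto
    have card_S: "card S = card J" unfolding S by (rule card_image) (rule inj_on_subset[OF inj J])
    have "card J \<le> d0" using card_mono[OF finite_atLeastLessThan J] unfolding d_def by simp
    then have "card (UNIV :: 'g set) * card J \<le> N" unfolding N_def by simp
    then show ?thesis
      using tilable_cylinder_minus_boxes[OF part \<open>T \<noteq> {}\<close> J] that(2) S card_S by simp
  qed
  ultimately show ?thesis by blast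
qed

theorem lemma9:
  fixes T :: "'g::{ab_group_add, finite} set"
  assumes "T \<noteq> {}" and "T \<noteq> UNIV"
  shows "\<exists>A. T \<subset> A \<and>
    (\<forall>d0::nat. d0 \<ge> 1 \<longrightarrow>
      (\<exists>d F. d \<ge> d0 \<and> card F \<ge> d0 \<and> finite F \<and>
         (\<forall>S\<in>F. S \<subseteq> power_set A d) \<and> pairwise disjnt F \<and>
         (\<forall>S. S \<subseteq> F \<and> card S mod card T = 1 mod card T \<longrightarrow>
            tilable T (Suc d) {g # xs | g xs. xs \<in> power_set A d - \<Union>S})))"
proof -
  obtain s where s: "(\<lambda>t. s + t) ` T \<noteq> T" using exists_translate_ne[OF assms] by blast
  define S where "S = (\<lambda>t. s + t) ` T"
  have part: "shift_partition T (T - S) (T \<inter> S) (S - T) s"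
    unfolding S_def by (rule shift_partition_translate)
  have new: "\<not> S \<subseteq> T" and old: "\<not> T \<subseteq> S"
    using translate_incomparable[OF _ s] unfolding S_def by simp_all
  have A: "(T - S) \<union> (T \<inter> S) \<union> (S - T) = T \<union> S" by blast
  note family = exists_box_family[OF part assms(1), unfolded A]
  show ?thesis
  proof (intro exI[of _ "T \<union> S"] conjI allI impI)
    show "T \<subset> T \<union> S" using new by blast
  qed (use family old new in blast)
qed

end
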